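(* Let $J\ge2$ be an integer. For $x\in\mathbb R^J$ put $x_{J+1}:=x_1$, $\min x:=\min\{x_1,\dots,x_J\}$, $\max x:=\max\{x_1,\dots,x_J\}$. Then $$\max_{\substack{x\in\mathbb R^J\setminus\{0\}\\ \min x\le0\le\max x}}\frac{|x|^2}{\sum_{j=1}^J(x_{j+1}-x_j)^2}=\max_{y\in\mathbb R^J\setminus\{0\}}\frac{|y|^2}{\sum_{j=1}^J(y_{j+1}-y_j)^2+(y_1+y_J)^2}=\frac{1}{2(1-\cos(\pi/J))},$$ where also $y_{J+1}:=y_1$.
   Context: $|x|$ denotes the Euclidean norm. *)

theory Defs
  imports Complex_Main
begin

text \<open>Vectors in R^J are represented as functions nat => real, of which only the
  coordinates 1..J are used. Cyclic successor index: J+1 is identified with 1.\<close>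

definition cyc_succ :: "nat \<Rightarrow> nat \<Rightarrow> nat" where
  "cyc_succ J j = (if j = J then 1 else j + 1)"

definition sqnorm :: "nat \<Rightarrow> (nat \<Rightarrow> real) \<Rightarrow> real" where
  "sqnorm J x = (\<Sum>j=1..J. (x j)^2)"

definition cyc_energy :: "nat \<Rightarrow> (nat \<Rightarrow> real) \<Rightarrow> real" where
  "cyc_energy J x = (\<Sum>j=1..J. (x (cyc_succ J j) - x j)^2)"

definition nonzero_vec :: "nat \<Rightarrow> (nat \<Rightarrow> real) \<Rightarrow> bool" where
  "nonzero_vec J x = (\<exists>j\<in>{1..J}. x j \<noteq> 0)"

definition quot_set1 :: "nat \<Rightarrow> real set" where
  "quot_set1 J = {sqnorm J x / cyc_energy J x | x.
      nonzero_vec J x \<and> Min (x ` {1..J}) \<le> 0 \<and> 0 \<le> Max (x ` {1..J})}"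

definition quot_set2 :: "nat \<Rightarrow> real set" where
  "quot_set2 J = {sqnorm J y / (cyc_energy J y + (y 1 + y J)^2) | y. nonzero_vec J y}"

definition is_max_of :: "real \<Rightarrow> real set \<Rightarrow> bool" where
  "is_max_of c S = (c \<in> S \<and> (\<forall>v\<in>S. v \<le> c))"

end

theory Submission
  imports Defs
begin

text \<open>A discrete Picone (ground-state) argument. For weights \<open>p, q > 0\<close> on the endpoints of an
  edge, \<open>(b - a)\<^sup>2 \<ge> (1 - q/p) a\<^sup>2 + (1 - p/q) b\<^sup>2\<close>, with equality when \<open>(a, b)\<close> is
  proportional to \<open>(p, q)\<close>. Summing over the edges of the cycle and regrouping by vertices,
  vertex \<open>i\<close> receives the coefficient \<open>2 - (\<phi>(i+1) + \<phi>(i-1)) / \<phi>(i)\<close>, which is the constant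
  \<open>2(1 - cos(\<pi>/J))\<close> when \<open>\<phi>\<close> is a suitable sine mode.

  For the first quotient, splitting \<open>x\<close> into its positive and negative parts does not increase
  the energy, and each part vanishes at some vertex \<open>k\<close> (a minimum resp. maximum of \<open>x\<close>);
  the mode \<open>|sin(\<pi>(j - k)/J)|\<close> vanishes only at \<open>k\<close>. For the second quotient the last edge
  contributes \<open>(y\<^sub>1 - y\<^sub>J)\<^sup>2 + (y\<^sub>1 + y\<^sub>J)\<^sup>2 = 2y\<^sub>J\<^sup>2 + 2y\<^sub>1\<^sup>2\<close>, which is the Picone term
  of the mode \<open>sin(\<pi>(j - 1/2)/J)\<close>, antisymmetric about the ghost vertices \<open>0\<close> and \<open>J + 1\<close>.
  Both modes attain equality.\<close>

lemma sum_cyc_succ_reindex: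
  assumes "J \<ge> 1"
  shows "(\<Sum>j=1..J. h (cyc_succ J j)) = (\<Sum>j=1..J. h j :: real)"
  by (rule sum.reindex_bij_witness[where i="\<lambda>i. if i = 1 then J else i - 1" and j="cyc_succ J"])
     (use assms in \<open>auto simp: cyc_succ_def\<close>)

lemma sum_cyclic_edge_terms:
  assumes "J \<ge> 1"
  shows "(\<Sum>j=1..J. A j * (z j)^2 + B (cyc_succ J j) * (z (cyc_succ J j))^2)
       = (\<Sum>i=1..J. (A i + B i) * (z i :: real)^2)"
  using sum_cyc_succ_reindex[OF assms, of "\<lambda>i. B i * (z i)^2"]
  by (simp add: sum.distrib algebra_simps)

lemma cyclic_edge_sum_ge:
  assumes "J \<ge> 1"
    and edge: "\<And>j. j \<in> {1..J} \<Longrightarrow> A j * (z j)^2 + B (cyc_succ J j) * (z (cyc_succ J j))^2 \<le> e j"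
    and node: "\<And>i. i \<in> {1..J} \<Longrightarrow> l * (z i)^2 \<le> (A i + B i) * (z i :: real)^2"
  shows "l * sqnorm J z \<le> (\<Sum>j=1..J. e j)"
proof -
  have "l * sqnorm J z \<le> (\<Sum>i=1..J. (A i + B i) * (z i)^2)"
    unfolding sqnorm_def sum_distrib_left by (rule sum_mono) (rule node)
  also have "\<dots> \<le> (\<Sum>j=1..J. e j)"
    unfolding sum_cyclic_edge_terms[OF assms(1), symmetric] by (rule sum_mono) (rule edge)
  finally show ?thesis .
qed

lemma cyclic_edge_sum_eq:
  assumes "J \<ge> 1"
    and edge: "\<And>j. j \<in> {1..J} \<Longrightarrow> e j = A j * (z j)^2 + B (cyc_succ J j) * (z (cyc_succ J j))^2"
    and node: "\<And>i. i \<in> {1..J} \<Longrightarrow> (A i + B i) * (z i)^2 = l * (z i :: real)^2"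
  shows "(\<Sum>j=1..J. e j) = l * sqnorm J z"
proof -
  have "(\<Sum>j=1..J. e j) = (\<Sum>i=1..J. (A i + B i) * (z i)^2)"
    unfolding sum_cyclic_edge_terms[OF assms(1), symmetric] by (rule sum.cong) (simp_all add: edge)
  also have "\<dots> = l * sqnorm J z"
    unfolding sqnorm_def sum_distrib_left by (rule sum.cong) (simp_all add: node)
  finally show ?thesis .
qed

lemma picone_edge_ineq:
  fixes a b p q :: real
  assumes "0 \<le> p" "0 \<le> q" "p = 0 \<Longrightarrow> a = 0" "q = 0 \<Longrightarrow> b = 0"
  shows "(1 - q / p) * a^2 + (1 - p / q) * b^2 \<le> (b - a)^2"
proof (cases "p = 0 \<or> q = 0")
  case True
  then show ?thesis using assms by (auto simp: power2_eq_square)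
next
  case False
  then have "p > 0" "q > 0" using assms by auto
  have "0 \<le> p * q * (a / p - b / q)^2" using \<open>p > 0\<close> \<open>q > 0\<close> by simp
  also have "\<dots> = (b - a)^2 - ((1 - q / p) * a^2 + (1 - p / q) * b^2)"
    using \<open>p > 0\<close> \<open>q > 0\<close> by (simp add: field_simps power2_eq_square)
  finally show ?thesis by simp
qed

lemma picone_edge_eq:
  fixes a b :: real
  shows "(b - a)^2 = (1 - b / a) * a^2 + (1 - a / b) * b^2"
  by (cases "a = 0"; cases "b = 0") (auto simp: field_simps power2_eq_square)

text \<open>The weights use the linear neighbours \<open>j \<plusminus> 1\<close>; the boundary condition of each problem is
  encoded in the ghost values \<open>\<phi> 0\<close> and \<open>\<phi> (J + 1)\<close>.\<close>

definition fwd_weight :: "(nat \<Rightarrow> real) \<Rightarrow> nat \<Rightarrow> real" where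
  "fwd_weight \<phi> j = 1 - \<phi> (j + 1) / \<phi> j"

definition bwd_weight :: "(nat \<Rightarrow> real) \<Rightarrow> nat \<Rightarrow> real" where
  "bwd_weight \<phi> i = 1 - \<phi> (i - 1) / \<phi> i"

lemma weight_sum_eigen:
  assumes "\<phi> (i + 1) + \<phi> (i - 1) = 2 * c * \<phi> i" "\<phi> i \<noteq> 0"
  shows "fwd_weight \<phi> i + bwd_weight \<phi> i = 2 * (1 - c)"
proof -
  have "fwd_weight \<phi> i + bwd_weight \<phi> i = 2 - (\<phi> (i + 1) + \<phi> (i - 1)) / \<phi> i"
    unfolding fwd_weight_def bwd_weight_def by (simp add: add_divide_distrib)
  then show ?thesis using assms by simp
qed

lemma cyc_energy_ge_ground_state:
  assumes J: "J \<ge> 1"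
    and nonneg: "\<And>j. j \<in> {1..J} \<Longrightarrow> 0 \<le> \<phi> j"
    and ends: "\<phi> 0 = \<phi> J" "\<phi> (J + 1) = \<phi> 1"
    and vanish: "\<And>j. j \<in> {1..J} \<Longrightarrow> \<phi> j = 0 \<Longrightarrow> z j = 0"
    and eigen: "\<And>i. i \<in> {1..J} \<Longrightarrow> \<phi> i \<noteq> 0 \<Longrightarrow> \<phi> (i + 1) + \<phi> (i - 1) = 2 * c * \<phi> i"
  shows "2 * (1 - c) * sqnorm J z \<le> cyc_energy J z"
  unfolding cyc_energy_def
proof (rule cyclic_edge_sum_ge[where A="fwd_weight \<phi>" and B="bwd_weight \<phi>", OF J])
  fix j assume j: "j \<in> {1..J}"
  let ?k = "cyc_succ J j"
  have k: "?k \<in> {1..J}" "\<phi> (j + 1) = \<phi> ?k" "\<phi> (?k - 1) = \<phi> j"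
    using j ends by (auto simp: cyc_succ_def)
  show "fwd_weight \<phi> j * (z j)^2 + bwd_weight \<phi> ?k * (z ?k)^2 \<le> (z ?k - z j)^2"
    unfolding fwd_weight_def bwd_weight_def k(2,3)
    by (rule picone_edge_ineq) (use j k(1) nonneg vanish in auto)
next
  fix i assume i: "i \<in> {1..J}"
  show "2 * (1 - c) * (z i)^2 \<le> (fwd_weight \<phi> i + bwd_weight \<phi> i) * (z i)^2"
    using weight_sum_eigen[OF eigen[OF i]] vanish[OF i] by (cases "\<phi> i = 0") auto
qed

lemma cyc_energy_ground_state:
  assumes J: "J \<ge> 1"
    and ends: "\<phi> 0 = \<phi> J" "\<phi> (J + 1) = \<phi> 1"
    and eigen: "\<And>i. i \<in> {1..J} \<Longrightarrow> \<phi> i \<noteq> 0 \<Longrightarrow> \<phi> (i + 1) + \<phi> (i - 1) = 2 * c * \<phi> i"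
  shows "cyc_energy J \<phi> = 2 * (1 - c) * sqnorm J \<phi>"
  unfolding cyc_energy_def
proof (rule cyclic_edge_sum_eq[where A="fwd_weight \<phi>" and B="bwd_weight \<phi>", OF J])
  fix j assume j: "j \<in> {1..J}"
  let ?k = "cyc_succ J j"
  have k: "\<phi> (j + 1) = \<phi> ?k" "\<phi> (?k - 1) = \<phi> j"
    using j ends by (auto simp: cyc_succ_def)
  show "(\<phi> ?k - \<phi> j)^2 = fwd_weight \<phi> j * (\<phi> j)^2 + bwd_weight \<phi> ?k * (\<phi> ?k)^2"
    unfolding fwd_weight_def bwd_weight_def k by (rule picone_edge_eq)
next
  fix i assume i: "i \<in> {1..J}"
  show "(fwd_weight \<phi> i + bwd_weight \<phi> i) * (\<phi> i)^2 = 2 * (1 - c) * (\<phi> i)^2"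
    using weight_sum_eigen[OF eigen[OF i]] by (cases "\<phi> i = 0") auto
qed

definition twisted_edge :: "nat \<Rightarrow> (nat \<Rightarrow> real) \<Rightarrow> nat \<Rightarrow> real" where
  "twisted_edge J y j = (y (cyc_succ J j) - y j)^2 + (if j = J then (y 1 + y J)^2 else 0)"

lemma sum_twisted_edge:
  assumes "J \<ge> 1"
  shows "(\<Sum>j=1..J. twisted_edge J y j) = cyc_energy J y + (y 1 + y J)^2"
  using assms by (simp add: twisted_edge_def cyc_energy_def sum.distrib sum.delta')

lemma twisted_edge_last:
  assumes "\<phi> 0 = - \<phi> 1" "\<phi> (J + 1) = - \<phi> J" "\<phi> 1 \<noteq> 0" "\<phi> J \<noteq> 0"
  shows "twisted_edge J y J = fwd_weight \<phi> J * (y J)^2 + bwd_weight \<phi> (cyc_succ J J) * (y (cyc_succ J J))^2"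
  using assms by (simp add: twisted_edge_def fwd_weight_def bwd_weight_def cyc_succ_def power2_eq_square algebra_simps)

lemma twisted_energy_ge_ground_state:
  assumes J: "J \<ge> 1"
    and pos: "\<And>j. j \<in> {1..J} \<Longrightarrow> 0 < \<phi> j"
    and ends: "\<phi> 0 = - \<phi> 1" "\<phi> (J + 1) = - \<phi> J"
    and eigen: "\<And>i. i \<in> {1..J} \<Longrightarrow> \<phi> (i + 1) + \<phi> (i - 1) = 2 * c * \<phi> i"
  shows "2 * (1 - c) * sqnorm J y \<le> cyc_energy J y + (y 1 + y J)^2"
  unfolding sum_twisted_edge[OF J, symmetric]
proof (rule cyclic_edge_sum_ge[where A="fwd_weight \<phi>" and B="bwd_weight \<phi>", OF J])
  fix j assume j: "j \<in> {1..J}"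
  show "fwd_weight \<phi> j * (y j)^2 + bwd_weight \<phi> (cyc_succ J j) * (y (cyc_succ J j))^2
        \<le> twisted_edge J y j"
  proof (cases "j = J")
    case True
    then show ?thesis using twisted_edge_last[OF ends] pos J by force
  next
    case False
    then have "0 < \<phi> j" "0 < \<phi> (j + 1)" using j pos by auto
    then have "fwd_weight \<phi> j * (y j)^2 + bwd_weight \<phi> (j + 1) * (y (j + 1))^2 \<le> (y (j + 1) - y j)^2"
      unfolding fwd_weight_def bwd_weight_def add_diff_cancel_right'
      by (intro picone_edge_ineq) auto
    then show ?thesis using False by (simp add: twisted_edge_def cyc_succ_def)
  qed
next
  fix i assume i: "i \<in> {1..J}"
  show "2 * (1 - c) * (y i)^2 \<le> (fwd_weight \<phi> i + bwd_weight \<phi> i) * (y i)^2"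
    using weight_sum_eigen[OF eigen[OF i]] pos[OF i] by simp
qed

lemma twisted_energy_ground_state:
  assumes J: "J \<ge> 1"
    and pos: "\<And>j. j \<in> {1..J} \<Longrightarrow> 0 < \<phi> j"
    and ends: "\<phi> 0 = - \<phi> 1" "\<phi> (J + 1) = - \<phi> J"
    and eigen: "\<And>i. i \<in> {1..J} \<Longrightarrow> \<phi> (i + 1) + \<phi> (i - 1) = 2 * c * \<phi> i"
  shows "cyc_energy J \<phi> + (\<phi> 1 + \<phi> J)^2 = 2 * (1 - c) * sqnorm J \<phi>"
  unfolding sum_twisted_edge[OF J, symmetric]
proof (rule cyclic_edge_sum_eq[where A="fwd_weight \<phi>" and B="bwd_weight \<phi>", OF J])
  fix j assume j: "j \<in> {1..J}"
  show "twisted_edge J \<phi> j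
        = fwd_weight \<phi> j * (\<phi> j)^2 + bwd_weight \<phi> (cyc_succ J j) * (\<phi> (cyc_succ J j))^2"
  proof (cases "j = J")
    case True
    then show ?thesis using twisted_edge_last[OF ends] pos J by force
  next
    case False
    then show ?thesis
      using picone_edge_eq[where a="\<phi> j" and b="\<phi> (j + 1)"]
      by (simp add: twisted_edge_def cyc_succ_def fwd_weight_def bwd_weight_def)
  qed
next
  fix i assume i: "i \<in> {1..J}"
  show "(fwd_weight \<phi> i + bwd_weight \<phi> i) * (\<phi> i)^2 = 2 * (1 - c) * (\<phi> i)^2"
    using weight_sum_eigen[OF eigen[OF i]] pos[OF i] by simp
qed

lemma sin_recurrence: "sin (h * (x + 1 :: real)) + sin (h * (x - 1)) = 2 * cos h * sin (h * x)"
  by (simp add: distrib_left right_diff_distrib sin_add sin_diff)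

lemma abs_sin_pos: "0 < \<bar>t\<bar> \<Longrightarrow> \<bar>t\<bar> < pi \<Longrightarrow> 0 < \<bar>sin t\<bar>"
  using sin_gt_zero[of t] sin_gt_zero[of "- t"] by (cases "t \<ge> 0") auto

lemma pi_div_mult_less_pi: "0 < (n::real) \<Longrightarrow> pi / n * x < pi \<longleftrightarrow> x < n"
  by (simp add: field_simps)

lemma pi_div_mult_le_pi: "0 < (n::real) \<Longrightarrow> pi / n * x \<le> pi \<longleftrightarrow> x \<le> n"
  by (simp add: field_simps)

lemma abs_sin_recurrence:
  assumes "0 \<le> a" "a \<le> \<bar>t\<bar>" "\<bar>t\<bar> \<le> pi - a"
  shows "\<bar>sin (t + a)\<bar> + \<bar>sin (t - a)\<bar> = 2 * cos a * \<bar>sin t\<bar>"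
proof -
  have nonneg: "\<bar>sin (s + a)\<bar> + \<bar>sin (s - a)\<bar> = 2 * cos a * \<bar>sin s\<bar>"
    if "a \<le> s" "s \<le> pi - a" for s
  proof -
    have "0 \<le> sin (s + a)" "0 \<le> sin (s - a)" "0 \<le> sin s"
      by (rule sin_ge_zero; use that assms(1) in linarith)+
    moreover have "sin (s + a) + sin (s - a) = 2 * cos a * sin s"
      by (simp add: sin_add sin_diff)
    ultimately show ?thesis by simp
  qed
  show ?thesis
  proof (cases "t \<ge> 0")
    case True
    then show ?thesis using assms nonneg by simp
  next
    case False
    have "- t + a = - (t - a)" "- t - a = - (t + a)" by simp_all
    then have "\<bar>sin (t + a)\<bar> + \<bar>sin (t - a)\<bar> = \<bar>sin (- t + a)\<bar> + \<bar>sin (- t - a)\<bar>"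
      by (simp only: sin_minus abs_minus add.commute)
    also have "\<dots> = 2 * cos a * \<bar>sin (- t)\<bar>" using assms False nonneg[of "- t"] by simp
    finally show ?thesis by simp
  qed
qed

lemma abs_sin_add_pi: "\<bar>sin (x + pi)\<bar> = \<bar>sin x\<bar>"
  by (simp add: sin_periodic_pi)

definition periodic_mode :: "nat \<Rightarrow> nat \<Rightarrow> nat \<Rightarrow> real" where
  "periodic_mode J k j = \<bar>sin (pi / J * (real j - real k))\<bar>"

definition twisted_mode :: "nat \<Rightarrow> nat \<Rightarrow> real" where
  "twisted_mode J j = sin (pi / J * (real j - 1 / 2))"

lemma periodic_mode_nonzero:
  assumes "j \<in> {1..J}" "k \<in> {1..J}" "j \<noteq> k"
  shows "periodic_mode J k j \<noteq> 0"
proof -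
  let ?d = "real j - real k"
  have "0 < \<bar>?d\<bar>" "\<bar>?d\<bar> < J" using assms by auto
  moreover have "\<bar>pi / J * ?d\<bar> = pi / J * \<bar>?d\<bar>" by (simp add: abs_mult)
  ultimately have "0 < \<bar>pi / J * ?d\<bar>" "\<bar>pi / J * ?d\<bar> < pi"
    using pi_div_mult_less_pi[of J] by auto
  then show ?thesis unfolding periodic_mode_def using abs_sin_pos by force
qed

lemma periodic_mode_ends:
  assumes "J \<ge> 1"
  shows "periodic_mode J k 0 = periodic_mode J k J" "periodic_mode J k (J + 1) = periodic_mode J k 1"
proof -
  have "pi / J * (real J - real k) = pi / J * (0 - real k) + pi"
    "pi / J * (real (J + 1) - real k) = pi / J * (1 - real k) + pi"
    using assms by (simp_all add: field_simps)
  then show "periodic_mode J k 0 = periodic_mode J k J" "periodic_mode J k (J + 1) = periodic_mode J k 1"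
    unfolding periodic_mode_def by (simp_all only: abs_sin_add_pi of_nat_0 of_nat_1)
qed

lemma periodic_mode_eigen:
  assumes "i \<in> {1..J}" "k \<in> {1..J}" "i \<noteq> k"
  shows "periodic_mode J k (i + 1) + periodic_mode J k (i - 1) = 2 * cos (pi / J) * periodic_mode J k i"
proof -
  let ?d = "real i - real k" and ?t = "pi / J * (real i - real k)"
  have d: "1 \<le> \<bar>?d\<bar>" "\<bar>?d\<bar> + 1 \<le> J" using assms by auto
  have t: "\<bar>?t\<bar> = pi / J * \<bar>?d\<bar>" by (simp add: abs_mult)
  have "pi / J \<le> \<bar>?t\<bar>" unfolding t using mult_left_mono[OF d(1), of "pi / J"] by simp
  moreover have "\<bar>?t\<bar> \<le> pi - pi / J"
    using pi_div_mult_le_pi[of J "\<bar>?d\<bar> + 1"] d(2) assms unfolding t by (simp add: distrib_left)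
  ultimately have rec: "\<bar>sin (?t + pi / J)\<bar> + \<bar>sin (?t - pi / J)\<bar> = 2 * cos (pi / J) * \<bar>sin ?t\<bar>"
    by (intro abs_sin_recurrence) auto
  have "pi / J * (real (i + 1) - real k) = ?t + pi / J"
    "pi / J * (real (i - 1) - real k) = ?t - pi / J"
    using assms by (auto simp: field_simps of_nat_diff)
  then show ?thesis
    unfolding periodic_mode_def using rec by simp
qed

lemma twisted_mode_pos:
  assumes "j \<in> {1..J}"
  shows "0 < twisted_mode J j"
proof -
  have "0 < pi / J * (real j - 1 / 2)" "pi / J * (real j - 1 / 2) < pi"
    using assms pi_div_mult_less_pi[of J "real j - 1 / 2"] by auto
  then show ?thesis unfolding twisted_mode_def by (rule sin_gt_zero)
qed

lemma twisted_mode_ends: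
  assumes "J \<ge> 1"
  shows "twisted_mode J 0 = - twisted_mode J 1" "twisted_mode J (J + 1) = - twisted_mode J J"
proof -
  have "pi / J * (real (J + 1) - 1 / 2) = pi / J * (1 - 1 / 2) + pi"
    "pi / J * (real J - 1 / 2) = pi - pi / J * (1 - 1 / 2)"
    "pi / J * (0 - 1 / 2) = - (pi / J * (1 - 1 / 2))"
    using assms by (simp_all add: field_simps)
  then show "twisted_mode J 0 = - twisted_mode J 1" "twisted_mode J (J + 1) = - twisted_mode J J"
    unfolding twisted_mode_def by (simp_all only: sin_periodic_pi sin_pi_minus sin_minus of_nat_0 of_nat_1)
qed

lemma twisted_mode_eigen:
  assumes "i \<ge> 1"
  shows "twisted_mode J (i + 1) + twisted_mode J (i - 1) = 2 * cos (pi / J) * twisted_mode J i"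
  using sin_recurrence[of "pi / J" "real i - 1 / 2"] assms
  by (simp add: twisted_mode_def of_nat_diff algebra_simps)

lemma cyc_energy_ge_of_vanishing:
  assumes J: "J \<ge> 1" and k: "k \<in> {1..J}" and zk: "z k = 0"
  shows "2 * (1 - cos (pi / J)) * sqnorm J z \<le> cyc_energy J z"
proof (rule cyc_energy_ge_ground_state[where \<phi>="periodic_mode J k", OF J])
  show "periodic_mode J k 0 = periodic_mode J k J" "periodic_mode J k (J + 1) = periodic_mode J k 1"
    using periodic_mode_ends[OF J] by simp_all
next
  fix j assume "j \<in> {1..J}" "periodic_mode J k j = 0"
  then show "z j = 0" using periodic_mode_nonzero[OF _ k] zk by blast
next
  fix i assume "i \<in> {1..J}" "periodic_mode J k i \<noteq> 0"
  moreover have "periodic_mode J k k = 0" by (simp add: periodic_mode_def)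
  ultimately show "periodic_mode J k (i + 1) + periodic_mode J k (i - 1)
                   = 2 * cos (pi / J) * periodic_mode J k i"
    using periodic_mode_eigen[OF _ k] by blast
qed (simp add: periodic_mode_def)

lemma cyc_energy_split_sign:
  "cyc_energy J (\<lambda>j. max (x j) 0) + cyc_energy J (\<lambda>j. max (- x j) 0) \<le> cyc_energy J x"
proof -
  have "(max b 0 - max a 0)^2 + (max (- b) 0 - max (- a) 0)^2 \<le> (b - a)^2" for a b :: real
    by (cases "a \<ge> 0"; cases "b \<ge> 0")
       (auto simp: power2_eq_square algebra_simps max_def mult_nonneg_nonpos mult_nonpos_nonneg)
  then show ?thesis
    unfolding cyc_energy_def sum.distrib[symmetric] by (intro sum_mono) simp
qed

lemma sqnorm_split_sign: "sqnorm J x = sqnorm J (\<lambda>j. max (x j) 0) + sqnorm J (\<lambda>j. max (- x j) 0)"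
proof -
  have sq: "a^2 = (max a 0)^2 + (max (- a) 0)^2" for a :: real
    by (cases "a \<ge> 0") (auto simp: max_def)
  show ?thesis unfolding sqnorm_def sum.distrib[symmetric] by (intro sum.cong refl sq)
qed

lemma cyc_energy_ge_sign_changing:
  assumes J: "J \<ge> 1" and "Min (x ` {1..J}) \<le> 0" "0 \<le> Max (x ` {1..J})"
  shows "2 * (1 - cos (pi / J)) * sqnorm J x \<le> cyc_energy J x"
proof -
  let ?l = "2 * (1 - cos (pi / J))"
  have ne: "x ` {1..J} \<noteq> {}" using J by auto
  obtain k where k: "k \<in> {1..J}" "x k \<le> 0"
    using Min_in[OF _ ne] assms(2) by auto
  obtain k' where k': "k' \<in> {1..J}" "0 \<le> x k'"
    using Max_in[OF _ ne] assms(3) by auto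
  have "?l * sqnorm J (\<lambda>j. max (x j) 0) \<le> cyc_energy J (\<lambda>j. max (x j) 0)"
    by (rule cyc_energy_ge_of_vanishing[OF J k(1)]) (use k(2) in simp)
  moreover have "?l * sqnorm J (\<lambda>j. max (- x j) 0) \<le> cyc_energy J (\<lambda>j. max (- x j) 0)"
    by (rule cyc_energy_ge_of_vanishing[OF J k'(1)]) (use k'(2) in simp)
  ultimately show ?thesis
    using cyc_energy_split_sign[of J x] sqnorm_split_sign[of J x] by (simp add: distrib_left)
qed

lemma cyc_energy_periodic_mode:
  assumes J: "J \<ge> 1" and k: "k \<in> {1..J}"
  shows "cyc_energy J (periodic_mode J k) = 2 * (1 - cos (pi / J)) * sqnorm J (periodic_mode J k)"
proof (rule cyc_energy_ground_state[OF J periodic_mode_ends[OF J]])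
  fix i assume "i \<in> {1..J}" "periodic_mode J k i \<noteq> 0"
  moreover have "periodic_mode J k k = 0" by (simp add: periodic_mode_def)
  ultimately show "periodic_mode J k (i + 1) + periodic_mode J k (i - 1)
                   = 2 * cos (pi / J) * periodic_mode J k i"
    using periodic_mode_eigen[OF _ k] by blast
qed

lemma twisted_energy_ge:
  assumes J: "J \<ge> 1"
  shows "2 * (1 - cos (pi / J)) * sqnorm J y \<le> cyc_energy J y + (y 1 + y J)^2"
  using twisted_energy_ge_ground_state[OF J twisted_mode_pos twisted_mode_ends[OF J] twisted_mode_eigen]
  by simp

lemma twisted_energy_twisted_mode:
  assumes J: "J \<ge> 1"
  shows "cyc_energy J (twisted_mode J) + (twisted_mode J 1 + twisted_mode J J)^2
       = 2 * (1 - cos (pi / J)) * sqnorm J (twisted_mode J)"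
  using twisted_energy_ground_state[OF J twisted_mode_pos twisted_mode_ends[OF J] twisted_mode_eigen]
  by simp

lemma sqnorm_pos:
  assumes "nonzero_vec J x"
  shows "0 < sqnorm J x"
proof -
  obtain j where j: "j \<in> {1..J}" "x j \<noteq> 0" using assms by (auto simp: nonzero_vec_def)
  have "0 < (x j)^2" using j by simp
  also have "\<dots> \<le> sqnorm J x" unfolding sqnorm_def by (rule member_le_sum) (use j in auto)
  finally show ?thesis .
qed

lemma divide_le_inverse:
  fixes s l E :: real
  assumes "0 < s" "0 < l" "l * s \<le> E"
  shows "s / E \<le> 1 / l"
proof -
  have "0 < E" using assms by (smt (verit) mult_pos_pos)
  then show ?thesis using assms by (simp add: field_simps)
qed

lemma one_minus_cos_pi_div_pos:
  fixes J :: nat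
  assumes "J \<ge> 1"
  shows "0 < 1 - cos (pi / J)"
proof -
  have "0 < pi / J" "pi / J \<le> pi" using assms pi_div_mult_le_pi[of J 1] by auto
  then have "cos (pi / J) < cos 0" by (intro cos_monotone_0_pi) auto
  then show ?thesis by simp
qed

lemma is_max_of_quot_set1:
  assumes J: "J \<ge> 2"
  shows "is_max_of (1 / (2 * (1 - cos (pi / J)))) (quot_set1 J)"
  unfolding is_max_of_def
proof
  let ?l = "2 * (1 - cos (pi / J))" and ?x = "periodic_mode J 1"
  have l: "0 < ?l" using one_minus_cos_pi_div_pos[of J] J by simp
  have nz: "nonzero_vec J ?x"
    unfolding nonzero_vec_def using periodic_mode_nonzero[of 2 J 1] J by force
  have mem: "?x 1 \<in> ?x ` {1..J}" using J by simp
  have zero: "?x 1 = 0" by (simp add: periodic_mode_def)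
  have "Min (?x ` {1..J}) \<le> 0" using Min_le[OF _ mem] zero by simp
  moreover have "0 \<le> Max (?x ` {1..J})" using Max_ge[OF _ mem] zero by simp
  moreover have "sqnorm J ?x / cyc_energy J ?x = 1 / ?l"
    using cyc_energy_periodic_mode[of J 1] J sqnorm_pos[OF nz] l by simp
  ultimately show "1 / ?l \<in> quot_set1 J"
    unfolding quot_set1_def using nz by (intro CollectI exI[of _ ?x]) simp
  show "\<forall>v\<in>quot_set1 J. v \<le> 1 / ?l"
  proof
    fix v assume "v \<in> quot_set1 J"
    then obtain x where v: "v = sqnorm J x / cyc_energy J x" and x: "nonzero_vec J x"
      "Min (x ` {1..J}) \<le> 0" "0 \<le> Max (x ` {1..J})"
      unfolding quot_set1_def by blast
    have "?l * sqnorm J x \<le> cyc_energy J x"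
      using cyc_energy_ge_sign_changing[OF _ x(2,3)] J by simp
    then show "v \<le> 1 / ?l" unfolding v by (rule divide_le_inverse[OF sqnorm_pos[OF x(1)] l])
  qed
qed

lemma is_max_of_quot_set2:
  assumes J: "J \<ge> 1"
  shows "is_max_of (1 / (2 * (1 - cos (pi / J)))) (quot_set2 J)"
  unfolding is_max_of_def
proof
  let ?l = "2 * (1 - cos (pi / J))" and ?y = "twisted_mode J"
  have l: "0 < ?l" using one_minus_cos_pi_div_pos[OF J] by simp
  have nz: "nonzero_vec J ?y"
    unfolding nonzero_vec_def using twisted_mode_pos[of 1 J] J by force
  have "sqnorm J ?y / (cyc_energy J ?y + (?y 1 + ?y J)^2) = 1 / ?l"
    using twisted_energy_twisted_mode J sqnorm_pos[OF nz] l by simp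
  then show "1 / ?l \<in> quot_set2 J"
    unfolding quot_set2_def using nz by (intro CollectI exI[of _ ?y]) simp
  show "\<forall>v\<in>quot_set2 J. v \<le> 1 / ?l"
  proof
    fix v assume "v \<in> quot_set2 J"
    then obtain y where v: "v = sqnorm J y / (cyc_energy J y + (y 1 + y J)^2)"
      and y: "nonzero_vec J y"
      unfolding quot_set2_def by blast
    have "?l * sqnorm J y \<le> cyc_energy J y + (y 1 + y J)^2"
      using twisted_energy_ge J by simp
    then show "v \<le> 1 / ?l" unfolding v by (rule divide_le_inverse[OF sqnorm_pos[OF y] l])
  qed
qed

theorem lemma4p1:
  fixes J :: nat
  assumes "J \<ge> 2"
  shows "is_max_of (1 / (2 * (1 - cos (pi / real J)))) (quot_set1 J)
       \<and> is_max_of (1 / (2 * (1 - cos (pi / real J)))) (quot_set2 J)"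
  using is_max_of_quot_set1[OF assms] is_max_of_quot_set2[of J] assms by simp

end
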